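(* Let $k$ be a commutative ring and $A$ a commutative $k$-algebra. The injective $A$-linear map $$\theta_{A/k}=\bigoplus_{n\ge0}\theta_n:\operatorname{gr}\operatorname{Diff}_{A/k}\to(\operatorname{Sym}\Omega_{A/k})^*_{gr}$$ is a homomorphism of graded $A$-algebras, where $(\operatorname{Sym}\Omega_{A/k})^*_{gr}$ carries the shuffle product.
   Context: $\operatorname{Diff}^{(0)}_{A/k}$ = multiplications by elements of $A$; $\operatorname{Diff}^{(i+1)}_{A/k}=\{\varphi\in\operatorname{End}_k(A):[\varphi,a]\in\operatorname{Diff}^{(i)}_{A/k}\ \forall a\in A\}$, $[\varphi,a]=\varphi\circ a-a\circ\varphi$; $\operatorname{Diff}_{A/k}=\bigcup_i\operatorname{Diff}^{(i)}_{A/k}$ is a filtered ring whose associated graded ring $\operatorname{gr}\operatorname{Diff}_{A/k}=\bigoplus_n\operatorname{Diff}^{(n)}/\operatorname{Diff}^{(n-1)}$ ($\operatorname{Diff}^{(-1)}=0$) is a commutative graded $A$-algebra; $\sigma_n(P)$ denotes the class of $P\in\operatorname{Diff}^{(n)}$. $\Omega_{A/k}$ is the module of Kähler differentials, $d:A\to\Omega_{A/k}$. $(\operatorname{Sym}\Omega)^*_{gr}=\bigoplus_n\operatorname{Hom}_A(\operatorname{Sym}^n\Omega,A)$ with shuffle product $(u\star v)(\prod_{l=1}^{i+j}\omega_l)=\sum_{L\subset[i+j],\sharp L=i}u(\omega_L)v(\omega_{[i+j]\setminus L})$, $\omega_L=\prod_{l\in L}\omega_l$. For $P\in\operatorname{Diff}^{(n)}$,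 $\theta_n(\sigma_n(P))$ is the $A$-linear form on $\operatorname{Sym}^n\Omega_{A/k}$ determined by $dx_1\cdots dx_n\mapsto\sum_{L\subset[n]}(-1)^{\sharp L}x_LP(x_{[n]\setminus L})$ ($x_L=\prod_{i\in L}x_i$); this is well defined, depends only on $\sigma_n(P)$, and $\theta_n$ is injective. *)

theory Defs
  imports Main
begin

text \<open>A commutative k-algebra A is modelled by two commutative ring types 'k, 'a
  together with the structure map iota : k -> A (a unital ring homomorphism);
  the k-module structure on A is c . a = iota c * a.\<close>

definition ring_hom_map :: "('k::comm_ring_1 \<Rightarrow> 'a::comm_ring_1) \<Rightarrow> bool" where
  "ring_hom_map \<iota> \<longleftrightarrow> \<iota> 1 = 1 \<and> (\<forall>c d. \<iota> (c + d) = \<iota> c + \<iota> d) \<and> (\<forall>c d. \<iota> (c * d) = \<iota> c * \<iota> d)"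

definition k_linear :: "('k::comm_ring_1 \<Rightarrow> 'a::comm_ring_1) \<Rightarrow> ('a \<Rightarrow> 'a) \<Rightarrow> bool" where
  "k_linear \<iota> \<phi> \<longleftrightarrow> (\<forall>x y. \<phi> (x + y) = \<phi> x + \<phi> y) \<and> (\<forall>c x. \<phi> (\<iota> c * x) = \<iota> c * \<phi> x)"

definition commutator :: "('a::comm_ring_1 \<Rightarrow> 'a) \<Rightarrow> 'a \<Rightarrow> ('a \<Rightarrow> 'a)" where
  "commutator \<phi> a = (\<lambda>x. \<phi> (a * x) - a * \<phi> x)"

fun Diff :: "('k::comm_ring_1 \<Rightarrow> 'a::comm_ring_1) \<Rightarrow> nat \<Rightarrow> ('a \<Rightarrow> 'a) set" where
  "Diff \<iota> 0 = {\<phi>. \<exists>c. \<phi> = (\<lambda>x. c * x)}"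
| "Diff \<iota> (Suc n) = {\<phi>. k_linear \<iota> \<phi> \<and> (\<forall>a. commutator \<phi> a \<in> Diff \<iota> n)}"

text \<open>An A-linear form on Sym^n Omega is determined by its values on the generators
  dx_{l_1} ... dx_{l_n}.  For a fixed family x : nat -> A and a finite index set L,
  theta_form P x L is the value of theta_{card L}(sigma_{card L}(P)) on
  omega_L = prod_{l in L} dx_l, i.e.
  sum_{M subset L} (-1)^card M * x_M * P(x_{L - M}).\<close>
definition theta_form :: "('a::comm_ring_1 \<Rightarrow> 'a) \<Rightarrow> (nat \<Rightarrow> 'a) \<Rightarrow> nat set \<Rightarrow> 'a" where
  "theta_form P x L = (\<Sum>M\<in>Pow L. (-1) ^ card M * (\<Prod>l\<in>M. x l) * P (\<Prod>l\<in>L - M. x l))"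

text \<open>Shuffle product of a degree-i form u and a form v, evaluated on
  omega_S = prod_{l in S} dx_l:  sum over L subset S with card L = i of u(omega_L) v(omega_{S-L}).
  Forms are given through their values on the monomials omega_L.\<close>
definition shuffle :: "nat \<Rightarrow> (nat set \<Rightarrow> 'a::comm_ring_1) \<Rightarrow> (nat set \<Rightarrow> 'a) \<Rightarrow> nat set \<Rightarrow> 'a" where
  "shuffle i u v S = (\<Sum>L\<in>{L. L \<subseteq> S \<and> card L = i}. u L * v (S - L))"

end

theory Submission
  imports Defs "HOL.Modules"
begin

text \<open>Write [P, x_T] for the iterated commutator [..[P, x_{l_1}], .., x_{l_m}] of P with the
  elements x_l, l \<in> T. Expanding it gives
  [P, x_T](y) = \<Sum>_{M \<subseteq> T} (-1)^|M| x_M P(x_{T-M} y), so theta_n(\<sigma>_n(P))(\<omega>_L) = [P, x_L](1).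
  Since [-, a] is a derivation of composition, the Leibniz rule
  [P \<circ> Q, x_S] = \<Sum>_{T \<subseteq> S} [P, x_T] \<circ> [Q, x_{S-T}] holds. For P, Q of orders i, j and
  |S| = i + j, the terms with |T| \<noteq> i vanish because an operator of order n is killed by n + 1
  commutators, and for |T| = i the operator [P, x_T] has order 0, i.e. is multiplication by
  [P, x_T](1); what is left is the shuffle product.\<close>

lemma sum_Pow_insert:
  assumes "finite A" "a \<notin> A"
  shows "(\<Sum>X\<in>Pow (insert a A). f X) = (\<Sum>X\<in>Pow A. f X) + (\<Sum>X\<in>Pow A. f (insert a X))"
proof -
  have "inj_on (insert a) (Pow A)"
    using assms(2) by (intro inj_onI) (metis PowD insert_ident subset_iff)
  moreover have "Pow A \<inter> insert a ` Pow A = {}"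
    using assms(2) by auto
  ultimately show ?thesis
    unfolding Pow_insert using assms(1) by (simp add: sum.union_disjoint sum.reindex)
qed

definition iter_commutator :: "('a::comm_ring_1 \<Rightarrow> 'a) \<Rightarrow> (nat \<Rightarrow> 'a) \<Rightarrow> nat set \<Rightarrow> 'a \<Rightarrow> 'a" where
  "iter_commutator P x T y =
     (\<Sum>M\<in>Pow T. (-1) ^ card M * (\<Prod>l\<in>M. x l) * P ((\<Prod>l\<in>T - M. x l) * y))"

lemma theta_form_eq_iter_commutator: "theta_form P x L = iter_commutator P x L 1"
  by (simp add: theta_form_def iter_commutator_def)

lemma iter_commutator_empty [simp]: "iter_commutator P x {} = P"
  by (simp add: iter_commutator_def fun_eq_iff)

lemma iter_commutator_insert_apply:
  assumes "finite T" "a \<notin> T"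
  shows "iter_commutator P x (insert a T) y
    = iter_commutator P x T (x a * y) - x a * iter_commutator P x T y"
proof -
  have "(\<Prod>l\<in>insert a T - M. x l) * y = (\<Prod>l\<in>T - M. x l) * (x a * y)" if "M \<subseteq> T" for M
  proof -
    have "insert a T - M = insert a (T - M)"
      using that assms(2) by auto
    then show ?thesis
      using assms by (simp add: mult_ac)
  qed
  moreover have "(-1) ^ card (insert a M) * (\<Prod>l\<in>insert a M. x l)
      = - (x a * ((-1) ^ card M * (\<Prod>l\<in>M. x l)))" if "M \<subseteq> T" for M
  proof -
    have "finite M" "a \<notin> M"
      using that assms finite_subset by auto
    then show ?thesis
      by (simp add: mult_ac)
  qed
  moreover have "insert a T - insert a M = T - M" if "M \<subseteq> T" for M
    using that assms(2) by auto
  ultimately show ?thesis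
    unfolding iter_commutator_def sum_Pow_insert[OF assms]
    by (simp add: sum_negf sum_distrib_left mult.assoc)
qed

lemma iter_commutator_insert:
  assumes "finite T" "a \<notin> T"
  shows "iter_commutator P x (insert a T) = iter_commutator (commutator P (x a)) x T"
proof
  fix y
  show "iter_commutator P x (insert a T) y = iter_commutator (commutator P (x a)) x T y"
    unfolding iter_commutator_insert_apply[OF assms]
    by (simp add: iter_commutator_def commutator_def sum_distrib_left sum_subtractf[symmetric]
        algebra_simps)
qed

lemma iter_commutator_zero: "iter_commutator (\<lambda>_. 0) x T = (\<lambda>_. 0)"
  by (simp add: iter_commutator_def fun_eq_iff)

lemma additive_iter_commutator:
  assumes "additive P"
  shows "additive (iter_commutator P x T)"
  using additive.add[OF assms]
  by unfold_locales (simp add: iter_commutator_def distrib_left sum.distrib algebra_simps)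

lemma Diff_additive: "P \<in> Diff \<iota> n \<Longrightarrow> additive P"
  by (cases n) (auto simp: additive_def k_linear_def distrib_left)

lemma Diff_0_apply: "P \<in> Diff \<iota> 0 \<Longrightarrow> P y = P 1 * y"
  by auto

lemma iter_commutator_Diff:
  assumes "finite T" "P \<in> Diff \<iota> n" "card T \<le> n"
  shows "iter_commutator P x T \<in> Diff \<iota> (n - card T)"
  using assms
proof (induction T arbitrary: P n rule: finite_induct)
  case (insert a T)
  then obtain m where m: "n = Suc m" "card T \<le> m"
    by (cases n) auto
  then have "commutator P (x a) \<in> Diff \<iota> m"
    using insert.prems(1) by simp
  then show ?case
    using insert.IH m insert.hyps by (simp add: iter_commutator_insert)
qed simp

lemma iter_commutator_Diff_vanish:
  assumes "finite T" "P \<in> Diff \<iota> n" "n < card T"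
  shows "iter_commutator P x T = (\<lambda>_. 0)"
  using assms
proof (induction T arbitrary: P n rule: finite_induct)
  case (insert a T)
  show ?case
  proof (cases n)
    case 0
    then obtain c where "P = (\<lambda>y. c * y)"
      using insert.prems(1) by auto
    then have "commutator P (x a) = (\<lambda>_. 0)"
      by (simp add: commutator_def fun_eq_iff mult.left_commute)
    then show ?thesis
      using insert.hyps by (simp add: iter_commutator_insert iter_commutator_zero)
  next
    case (Suc m)
    then have "commutator P (x a) \<in> Diff \<iota> m" "m < card T"
      using insert.prems insert.hyps by auto
    then show ?thesis
      using insert.IH insert.hyps by (simp add: iter_commutator_insert)
  qed
qed simp

lemma iter_commutator_comp:
  assumes "finite S" "additive P"
  shows "iter_commutator (P \<circ> Q) x S y
    = (\<Sum>T\<in>Pow S. iter_commutator P x T (iter_commutator Q x (S - T) y))"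
  using assms(1)
proof (induction S arbitrary: y rule: finite_induct)
  case (insert a S)
  let ?P = "iter_commutator P x" and ?Q = "iter_commutator Q x"
  have "?P T (?Q (insert a S - T) y) + ?P (insert a T) (?Q (insert a S - insert a T) y)
      = ?P T (?Q (S - T) (x a * y)) - x a * ?P T (?Q (S - T) y)"
    if "T \<subseteq> S" for T
  proof -
    have T: "finite T" "a \<notin> T" "finite (S - T)" "a \<notin> S - T"
      using that insert.hyps finite_subset by auto
    moreover have "insert a S - T = insert a (S - T)" "insert a S - insert a T = S - T"
      using T(2) insert.hyps(2) by auto
    ultimately show ?thesis
      by (simp add: iter_commutator_insert_apply
          additive.diff[OF additive_iter_commutator[OF assms(2)]])
  qed
  then have "(\<Sum>T\<in>Pow (insert a S). ?P T (?Q (insert a S - T) y))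
      = (\<Sum>T\<in>Pow S. ?P T (?Q (S - T) (x a * y)) - x a * ?P T (?Q (S - T) y))"
    by (simp add: sum_Pow_insert[OF insert.hyps] sum.distrib[symmetric])
  also have "\<dots> = iter_commutator (P \<circ> Q) x S (x a * y) - x a * iter_commutator (P \<circ> Q) x S y"
    by (simp only: insert.IH sum_subtractf sum_distrib_left)
  finally show ?case
    by (simp only: iter_commutator_insert_apply[OF insert.hyps])
qed simp

lemma theta_form_comp:
  assumes "finite S" "card S = i + j" "P \<in> Diff \<iota> i" "Q \<in> Diff \<iota> j"
  shows "theta_form (P \<circ> Q) x S = shuffle i (theta_form P x) (theta_form Q x) S"
proof -
  let ?P = "iter_commutator P x" and ?Q = "iter_commutator Q x"
  have off_degree: "?P T (?Q (S - T) 1) = 0" if "T \<subseteq> S" "card T \<noteq> i" for T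
  proof (cases "i < card T")
    case True
    then show ?thesis
      using iter_commutator_Diff_vanish[OF _ assms(3)] finite_subset[OF that(1) assms(1)] by simp
  next
    case False
    then have "j < card (S - T)"
      using that assms(2) finite_subset[OF that(1) assms(1)] by (simp add: card_Diff_subset)
    then have "?Q (S - T) = (\<lambda>_. 0)"
      using iter_commutator_Diff_vanish[OF _ assms(4)] assms(1) by simp
    then show ?thesis
      using additive.zero[OF additive_iter_commutator[OF Diff_additive[OF assms(3)]]] by simp
  qed
  have in_degree: "?P T (?Q (S - T) 1) = ?P T 1 * ?Q (S - T) 1" if "T \<subseteq> S" "card T = i" for T
  proof -
    have "?P T \<in> Diff \<iota> 0"
      using iter_commutator_Diff[OF finite_subset[OF that(1) assms(1)] assms(3)] that(2) by simp
    then show ?thesis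
      by (rule Diff_0_apply)
  qed
  have "theta_form (P \<circ> Q) x S = (\<Sum>T\<in>Pow S. ?P T (?Q (S - T) 1))"
    by (simp add: theta_form_eq_iter_commutator iter_commutator_comp[OF assms(1) Diff_additive[OF assms(3)]])
  also have "\<dots> = (\<Sum>T\<in>{L. L \<subseteq> S \<and> card L = i}. ?P T (?Q (S - T) 1))"
    using off_degree assms(1) by (intro sum.mono_neutral_right) auto
  also have "\<dots> = shuffle i (theta_form P x) (theta_form Q x) S"
    using in_degree by (simp add: shuffle_def theta_form_eq_iter_commutator)
  finally show ?thesis .
qed

theorem mainTheorem6:
  fixes \<iota> :: "'k::comm_ring_1 \<Rightarrow> 'a::comm_ring_1"
  assumes "ring_hom_map \<iota>"
  shows "(\<forall>x. theta_form (\<lambda>a::'a. a) x {} = 1)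
    \<and> (\<forall>i j P Q x. P \<in> Diff \<iota> i \<longrightarrow> Q \<in> Diff \<iota> j \<longrightarrow>
         theta_form (P \<circ> Q) x {..<i + j}
           = shuffle i (theta_form P x) (theta_form Q x) {..<i + j})"
proof (intro conjI allI impI)
  show "theta_form (\<lambda>a. a) x {} = 1" for x :: "nat \<Rightarrow> 'a"
    by (simp add: theta_form_def)
  show "theta_form (P \<circ> Q) x {..<i + j} = shuffle i (theta_form P x) (theta_form Q x) {..<i + j}"
    if "P \<in> Diff \<iota> i" "Q \<in> Diff \<iota> j" for i j P Q and x :: "nat \<Rightarrow> 'a"
    using that by (intro theta_form_comp) auto
qed

end
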